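(* Let $\sigma=(a_1,\ldots,a_s)$ be a partition of $r$ with $a_1\ge\cdots\ge a_s$, let $H=H(n,r,q\mid\sigma)$, and let $M$ be a maximum matching in $H$. Then there is a matching $M_c$ in $H$ with $|M_c|=|M|$ (hence also maximum) such that: (1) for every edge $E\in M_c$ and every class $V_i$ with $E\cap V_i\neq\emptyset$, the vertices of $E\cap V_i$ are consecutive in $V_i$; and (2) in each class $V_i$, the vertices not covered by $M_c$ are consecutive and lie at the top or at the bottom of $V_i$.
   Context: A $\sigma$-hypergraph $H=H(n,r,q\mid\sigma)$, for a partition $\sigma$ of $r$, is the $r$-uniform hypergraph whose vertex set is the disjoint union of $n$ classes $V_1,\ldots,V_n$, each of size $q$; an $r$-subset $K$ of vertices is an edge iff the multiset of non-zero values $|K\cap V_i|$ equals $\sigma$. The vertices of each class are ordered $V_i=\{v_{1,i},v_{2,i},\ldots,v_{q,i}\}$; a set of vertices of $V_i$ is consecutive if it is of the form $\{v_{j,i},v_{j+1,i},\ldots,v_{j+m,i}\}$; the top $k$ vertices of $V_i$ are $v_{1,i},\ldots,v_{k,i}$ and the bottom $k$ vertices are $v_{q-k+1,i},\ldots,v_{q,i}$. A matching is a set of pairwise vertex-disjoint edges; a maximum matching is one of largest size. *)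

theory Defs
  imports Main "HOL-Library.Multiset"
begin

text \<open>Vertex v_{j,i} (the j-th vertex of class V_i) is the pair (j, i),
  with 1 \<le> j \<le> q and 1 \<le> i \<le> n.\<close>

definition cls :: "nat \<Rightarrow> nat \<Rightarrow> (nat \<times> nat) set" where
  "cls q i = {(j, i) | j. 1 \<le> j \<and> j \<le> q}"

definition verts :: "nat \<Rightarrow> nat \<Rightarrow> (nat \<times> nat) set" where
  "verts n q = (\<Union>i\<in>{1..n}. cls q i)"

definition is_partition :: "nat multiset \<Rightarrow> nat \<Rightarrow> bool" where
  "is_partition \<sigma> r \<longleftrightarrow> 0 \<notin># \<sigma> \<and> sum_mset \<sigma> = r"

definition sigma_edge :: "nat \<Rightarrow> nat \<Rightarrow> nat \<Rightarrow> nat multiset \<Rightarrow> (nat \<times> nat) set \<Rightarrow> bool" where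
  "sigma_edge n r q \<sigma> K \<longleftrightarrow> K \<subseteq> verts n q \<and> card K = r \<and>
     filter_mset (\<lambda>x. x \<noteq> 0) (image_mset (\<lambda>i. card (K \<inter> cls q i)) (mset_set {1..n})) = \<sigma>"

definition is_matching :: "nat \<Rightarrow> nat \<Rightarrow> nat \<Rightarrow> nat multiset \<Rightarrow> (nat \<times> nat) set set \<Rightarrow> bool" where
  "is_matching n r q \<sigma> M \<longleftrightarrow> (\<forall>E\<in>M. sigma_edge n r q \<sigma> E) \<and>
     (\<forall>E\<in>M. \<forall>F\<in>M. E \<noteq> F \<longrightarrow> E \<inter> F = {})"

definition is_max_matching :: "nat \<Rightarrow> nat \<Rightarrow> nat \<Rightarrow> nat multiset \<Rightarrow> (nat \<times> nat) set set \<Rightarrow> bool" where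
  "is_max_matching n r q \<sigma> M \<longleftrightarrow> is_matching n r q \<sigma> M \<and>
     (\<forall>M'. is_matching n r q \<sigma> M' \<longrightarrow> card M' \<le> card M)"

definition consecutive :: "nat \<Rightarrow> nat \<Rightarrow> (nat \<times> nat) set \<Rightarrow> bool" where
  "consecutive q i S \<longleftrightarrow> (\<exists>j m. 1 \<le> j \<and> j + m \<le> q \<and> S = {(k, i) | k. j \<le> k \<and> k \<le> j + m})"

definition top_k :: "nat \<Rightarrow> nat \<Rightarrow> nat \<Rightarrow> (nat \<times> nat) set" where
  "top_k q i k = {(j, i) | j. 1 \<le> j \<and> j \<le> k}"

definition bottom_k :: "nat \<Rightarrow> nat \<Rightarrow> nat \<Rightarrow> (nat \<times> nat) set" where
  "bottom_k q i k = {(j, i) | j. q - k + 1 \<le> j \<and> j \<le> q}"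

end

theory Submission
  imports Defs
begin

text \<open>List the edges of the matching as E_0, ..., E_{m-1} and replace E_t by the set that takes,
  in every class V_i, the next |E_t \<inter> V_i| vertices below those already taken by E_0, ..., E_{t-1}.
  The new edges have the same intersection sizes with the classes, so they are again edges, and
  they are pairwise disjoint, consecutive in each class, and leave a bottom segment of each class
  uncovered.\<close>

lemma cls_eq: "cls q i = (\<lambda>j. (j, i)) ` {1..q}"
  unfolding cls_def by auto

lemma card_cls: "card (cls q i) = q"
  unfolding cls_eq by (subst card_image) (auto simp: inj_on_def)

lemma finite_cls: "finite (cls q i)"
  unfolding cls_eq by simp

lemma finite_verts: "finite (verts n q)"
  unfolding verts_def using finite_cls by auto

lemma card_eq_sum_card_cls:
  assumes "K \<subseteq> verts n q"
  shows "card K = (\<Sum>i\<in>{1..n}. card (K \<inter> cls q i))"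
proof -
  have "K = (\<Union>i\<in>{1..n}. K \<inter> cls q i)"
    using assms unfolding verts_def by auto
  also have "card \<dots> = (\<Sum>i\<in>{1..n}. card (K \<inter> cls q i))"
    by (rule card_UN_disjoint) (auto simp: finite_cls cls_def)
  finally show ?thesis .
qed

lemma sigma_edge_cong_card_cls:
  assumes "sigma_edge n r q \<sigma> K" "K' \<subseteq> verts n q"
    and "\<And>i. i \<in> {1..n} \<Longrightarrow> card (K' \<inter> cls q i) = card (K \<inter> cls q i)"
  shows "sigma_edge n r q \<sigma> K'"
proof -
  have "card K' = card K"
    using assms card_eq_sum_card_cls[of K' n q] card_eq_sum_card_cls[of K n q]
    unfolding sigma_edge_def by simp
  moreover have "image_mset (\<lambda>i. card (K' \<inter> cls q i)) (mset_set {1..n})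
               = image_mset (\<lambda>i. card (K \<inter> cls q i)) (mset_set {1..n})"
    by (rule image_mset_cong) (use assms(3) in auto)
  ultimately show ?thesis
    using assms(1,2) unfolding sigma_edge_def by simp
qed

lemma sum_card_nth_Int_cls_le:
  assumes "distinct es" "\<forall>E\<in>set es. \<forall>F\<in>set es. E \<noteq> F \<longrightarrow> E \<inter> F = {}"
  shows "(\<Sum>u<length es. card (es ! u \<inter> cls q i)) \<le> q"
proof -
  have "(\<Sum>u<length es. card (es ! u \<inter> cls q i)) = card (\<Union>u<length es. es ! u \<inter> cls q i)"
  proof (rule card_UN_disjoint[symmetric])
    show "\<forall>u\<in>{..<length es}. \<forall>v\<in>{..<length es}. u \<noteq> v \<longrightarrow>
            es ! u \<inter> cls q i \<inter> (es ! v \<inter> cls q i) = {}"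
    proof (intro ballI impI)
      fix u v assume "u \<in> {..<length es}" "v \<in> {..<length es}" "u \<noteq> v"
      then have "es ! u \<noteq> es ! v" "es ! u \<in> set es" "es ! v \<in> set es"
        using assms(1) nth_eq_iff_index_eq by auto
      then show "es ! u \<inter> cls q i \<inter> (es ! v \<inter> cls q i) = {}"
        using assms(2) by blast
    qed
  qed (auto simp: finite_cls)
  also have "\<dots> \<le> card (cls q i)"
    by (rule card_mono[OF finite_cls]) auto
  finally show ?thesis by (simp add: card_cls)
qed

lemma bottom_k_eq_segment:
  "s \<le> q \<Longrightarrow> bottom_k q i (q - s) = {(j, i) | j. s < j \<and> j \<le> q}"
  unfolding bottom_k_def by auto

lemma consecutive_segment:
  "1 \<le> a \<Longrightarrow> a \<le> b \<Longrightarrow> b \<le> q \<Longrightarrow> consecutive q i {(j, i) | j. a \<le> j \<and> j \<le> b}"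
  unfolding consecutive_def by (intro exI[of _ a] exI[of _ "b - a"]) auto

definition stack_offset :: "(nat \<times> nat) set list \<Rightarrow> nat \<Rightarrow> nat \<Rightarrow> nat \<Rightarrow> nat" where
  "stack_offset es q i t = (\<Sum>u<t. card (es ! u \<inter> cls q i))"

definition stacked_edge :: "(nat \<times> nat) set list \<Rightarrow> nat \<Rightarrow> nat \<Rightarrow> nat \<Rightarrow> (nat \<times> nat) set" where
  "stacked_edge es q n t =
     {(j, i) | j i. i \<in> {1..n} \<and> stack_offset es q i t < j \<and> j \<le> stack_offset es q i (Suc t)}"

definition stacked_matching :: "(nat \<times> nat) set list \<Rightarrow> nat \<Rightarrow> nat \<Rightarrow> (nat \<times> nat) set set" where
  "stacked_matching es q n = stacked_edge es q n ` {..<length es}"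

lemma stack_offset_Suc:
  "stack_offset es q i (Suc t) = stack_offset es q i t + card (es ! t \<inter> cls q i)"
  unfolding stack_offset_def by simp

lemma stack_offset_mono: "t \<le> t' \<Longrightarrow> stack_offset es q i t \<le> stack_offset es q i t'"
  unfolding stack_offset_def by (rule sum_mono2) auto

lemma stack_offset_le:
  assumes "distinct es" "\<forall>E\<in>set es. \<forall>F\<in>set es. E \<noteq> F \<longrightarrow> E \<inter> F = {}" "t \<le> length es"
  shows "stack_offset es q i t \<le> q"
  using stack_offset_mono[OF assms(3)] sum_card_nth_Int_cls_le[OF assms(1,2)]
  unfolding stack_offset_def by (meson le_trans)

lemma stacked_edge_Int_cls:
  assumes "i \<in> {1..n}" "stack_offset es q i (Suc t) \<le> q"
  shows "stacked_edge es q n t \<inter> cls q i =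
           (\<lambda>j. (j, i)) ` {stack_offset es q i t<..stack_offset es q i (Suc t)}"
  using assms unfolding stacked_edge_def cls_def by auto

lemma stacked_edges_disjoint:
  assumes "t \<noteq> t'"
  shows "stacked_edge es q n t \<inter> stacked_edge es q n t' = {}"
proof -
  have "stacked_edge es q n t \<inter> stacked_edge es q n t' = {}" if "t < t'" for t t'
  proof -
    have "\<And>i. stack_offset es q i (Suc t) \<le> stack_offset es q i t'"
      using that stack_offset_mono by simp
    then show ?thesis
      unfolding stacked_edge_def by auto (meson le_less_trans not_le)
  qed
  with assms show ?thesis
    by (metis inf_commute linorder_neqE_nat)
qed

lemma mem_Union_stacked_edges:
  "(j, i) \<in> (\<Union>t<p. stacked_edge es q n t) \<longleftrightarrow>
     i \<in> {1..n} \<and> 0 < j \<and> j \<le> stack_offset es q i p"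
proof (induction p)
  case 0
  then show ?case by (auto simp: stack_offset_def)
next
  case (Suc p)
  have "(j, i) \<in> (\<Union>t<Suc p. stacked_edge es q n t) \<longleftrightarrow>
      (i \<in> {1..n} \<and> 0 < j \<and> j \<le> stack_offset es q i p) \<or> (j, i) \<in> stacked_edge es q n p"
    using Suc.IH by (auto simp: lessThan_Suc)
  moreover have "stack_offset es q i p \<le> stack_offset es q i (Suc p)"
    by (simp add: stack_offset_mono)
  ultimately show ?case
    by (auto simp: stacked_edge_def)
qed

context
  fixes n r q :: nat and \<sigma> :: "nat multiset" and es :: "(nat \<times> nat) set list"
  assumes matching: "is_matching n r q \<sigma> (set es)" and distinct: "distinct es"
begin

lemma stack_offset_le_q: "t \<le> length es \<Longrightarrow> stack_offset es q i t \<le> q"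
  using stack_offset_le[OF distinct] matching unfolding is_matching_def by blast

lemma stacked_edge_subset_verts:
  assumes "t < length es"
  shows "stacked_edge es q n t \<subseteq> verts n q"
proof
  fix x assume "x \<in> stacked_edge es q n t"
  then obtain j i where "x = (j, i)" "i \<in> {1..n}"
    "stack_offset es q i t < j" "j \<le> stack_offset es q i (Suc t)"
    unfolding stacked_edge_def by blast
  moreover have "stack_offset es q i (Suc t) \<le> q"
    using stack_offset_le_q assms by simp
  ultimately show "x \<in> verts n q"
    unfolding verts_def cls_def by auto
qed

lemma stacked_edge_is_sigma_edge:
  assumes "t < length es"
  shows "sigma_edge n r q \<sigma> (stacked_edge es q n t)"
proof (rule sigma_edge_cong_card_cls)
  show "sigma_edge n r q \<sigma> (es ! t)"
    using matching assms unfolding is_matching_def by simp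
  show "stacked_edge es q n t \<subseteq> verts n q"
    using assms by (rule stacked_edge_subset_verts)
  fix i assume "i \<in> {1..n}"
  then show "card (stacked_edge es q n t \<inter> cls q i) = card (es ! t \<inter> cls q i)"
    using stack_offset_le_q[of "Suc t"] assms
    by (simp add: stacked_edge_Int_cls card_image inj_on_def stack_offset_Suc)
qed

text \<open>Two stacked edges can only coincide if they are empty; then r = 0, all edges of the
  matching are empty, and distinctness of the list leaves at most one of them.\<close>
lemma inj_on_stacked_edge: "inj_on (stacked_edge es q n) {..<length es}"
proof (rule inj_onI, rule ccontr)
  fix t t' assume t: "t \<in> {..<length es}" and t': "t' \<in> {..<length es}"
    and eq: "stacked_edge es q n t = stacked_edge es q n t'" and "t \<noteq> t'"
  then have "card (stacked_edge es q n t) = 0"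
    using stacked_edges_disjoint[of t t' es q n] by simp
  then have "r = 0"
    using stacked_edge_is_sigma_edge t unfolding sigma_edge_def by simp
  have empty: "E = {}" if "E \<in> set es" for E
  proof -
    have "E \<subseteq> verts n q" "card E = 0"
      using matching that \<open>r = 0\<close> unfolding is_matching_def sigma_edge_def by auto
    then show ?thesis
      using finite_verts by (meson card_0_eq finite_subset)
  qed
  have "es ! t = es ! t'"
    using empty[OF nth_mem] t t' by simp
  with \<open>t \<noteq> t'\<close> t t' distinct show False
    by (simp add: nth_eq_iff_index_eq)
qed

lemma card_stacked_matching: "card (stacked_matching es q n) = card (set es)"
  unfolding stacked_matching_def
  by (simp add: card_image[OF inj_on_stacked_edge] distinct_card[OF distinct])

lemma stacked_matching_is_matching: "is_matching n r q \<sigma> (stacked_matching es q n)"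
  unfolding is_matching_def stacked_matching_def
proof (intro conjI ballI impI)
  fix E assume "E \<in> stacked_edge es q n ` {..<length es}"
  then show "sigma_edge n r q \<sigma> E"
    using stacked_edge_is_sigma_edge by auto
next
  fix E F assume "E \<in> stacked_edge es q n ` {..<length es}" "F \<in> stacked_edge es q n ` {..<length es}"
    and "E \<noteq> F"
  then obtain t t' where "E = stacked_edge es q n t" "F = stacked_edge es q n t'" "t \<noteq> t'"
    by auto
  then show "E \<inter> F = {}"
    by (simp add: stacked_edges_disjoint)
qed

lemma stacked_matching_consecutive:
  assumes "E \<in> stacked_matching es q n" "i \<in> {1..n}" "E \<inter> cls q i \<noteq> {}"
  shows "consecutive q i (E \<inter> cls q i)"
proof -
  obtain t where t: "t < length es" "E = stacked_edge es q n t"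
    using assms(1) unfolding stacked_matching_def by auto
  define a where "a = stack_offset es q i t"
  define b where "b = stack_offset es q i (Suc t)"
  have "b \<le> q"
    using stack_offset_le_q t unfolding b_def by simp
  then have E_cls: "E \<inter> cls q i = (\<lambda>j. (j, i)) ` {a<..b}"
    using stacked_edge_Int_cls[OF assms(2)] t unfolding a_def b_def by simp
  with assms(3) have "a < b" by auto
  with \<open>b \<le> q\<close> show ?thesis
    unfolding consecutive_def E_cls by (intro exI[of _ "Suc a"] exI[of _ "b - Suc a"]) auto
qed

lemma uncovered_stacked_matching:
  assumes "i \<in> {1..n}"
  shows "cls q i - \<Union>(stacked_matching es q n) =
           {(j, i) | j. stack_offset es q i (length es) < j \<and> j \<le> q}"
proof (rule set_eqI)
  fix x :: "nat \<times> nat"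
  obtain j i' where x: "x = (j, i')"
    by fastforce
  have "x \<in> \<Union>(stacked_matching es q n) \<longleftrightarrow>
          i' \<in> {1..n} \<and> 0 < j \<and> j \<le> stack_offset es q i' (length es)"
    unfolding x stacked_matching_def by (rule mem_Union_stacked_edges)
  then show "x \<in> cls q i - \<Union>(stacked_matching es q n) \<longleftrightarrow>
               x \<in> {(j, i) | j. stack_offset es q i (length es) < j \<and> j \<le> q}"
    using assms unfolding x cls_def by auto
qed

lemma uncovered_stacked_matching_bottom:
  assumes "i \<in> {1..n}"
  shows "\<exists>k\<le>q. cls q i - \<Union>(stacked_matching es q n) = bottom_k q i k \<and>
           (cls q i - \<Union>(stacked_matching es q n) \<noteq> {} \<longrightarrow>
              consecutive q i (cls q i - \<Union>(stacked_matching es q n)))"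
proof -
  define s where "s = stack_offset es q i (length es)"
  have "s \<le> q"
    using stack_offset_le_q unfolding s_def by simp
  have uncovered_eq: "cls q i - \<Union>(stacked_matching es q n) = {(j, i) | j. s < j \<and> j \<le> q}"
    using uncovered_stacked_matching[OF assms] unfolding s_def .
  show ?thesis
  proof (intro exI[of _ "q - s"] conjI impI)
    show "cls q i - \<Union>(stacked_matching es q n) = bottom_k q i (q - s)"
      unfolding uncovered_eq using \<open>s \<le> q\<close> by (rule bottom_k_eq_segment[symmetric])
    assume "cls q i - \<Union>(stacked_matching es q n) \<noteq> {}"
    then have "Suc s \<le> q"
      unfolding uncovered_eq by auto
    then show "consecutive q i (cls q i - \<Union>(stacked_matching es q n))"
      using consecutive_segment[of "Suc s" q q i] unfolding uncovered_eq Suc_le_eq by simp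
  qed simp
qed

end

theorem lemma3p1:
  fixes n r q :: nat and \<sigma> :: "nat multiset" and M :: "(nat \<times> nat) set set"
  assumes "is_partition \<sigma> r"
    and "is_max_matching n r q \<sigma> M"
  shows "\<exists>Mc. is_matching n r q \<sigma> Mc \<and> card Mc = card M \<and>
     (\<forall>E\<in>Mc. \<forall>i\<in>{1..n}. E \<inter> cls q i \<noteq> {} \<longrightarrow> consecutive q i (E \<inter> cls q i)) \<and>
     (\<forall>i\<in>{1..n}. \<exists>k. k \<le> q \<and>
        (cls q i - \<Union>Mc = top_k q i k \<or> cls q i - \<Union>Mc = bottom_k q i k) \<and>
        (cls q i - \<Union>Mc \<noteq> {} \<longrightarrow> consecutive q i (cls q i - \<Union>Mc)))"
proof -
  have "is_matching n r q \<sigma> M"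
    using assms(2) unfolding is_max_matching_def by simp
  moreover from this have "finite M"
    using finite_verts unfolding is_matching_def sigma_edge_def
    by (meson PowI finite_Pow_iff finite_subset subsetI)
  then obtain es where es: "set es = M" "distinct es"
    using finite_distinct_list by blast
  ultimately have matching: "is_matching n r q \<sigma> (set es)"
    by simp
  show ?thesis
  proof (intro exI[of _ "stacked_matching es q n"] conjI ballI impI)
    show "is_matching n r q \<sigma> (stacked_matching es q n)"
      by (rule stacked_matching_is_matching[OF matching es(2)])
    show "card (stacked_matching es q n) = card M"
      unfolding es(1)[symmetric] by (rule card_stacked_matching[OF matching es(2)])
  next
    fix E i assume "E \<in> stacked_matching es q n" "i \<in> {1..n}" "E \<inter> cls q i \<noteq> {}"
    then show "consecutive q i (E \<inter> cls q i)"
      by (rule stacked_matching_consecutive[OF matching es(2)])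
  next
    fix i assume "i \<in> {1..n}"
    then show "\<exists>k\<le>q. (cls q i - \<Union>(stacked_matching es q n) = top_k q i k \<or>
                         cls q i - \<Union>(stacked_matching es q n) = bottom_k q i k) \<and>
                 (cls q i - \<Union>(stacked_matching es q n) \<noteq> {} \<longrightarrow>
                    consecutive q i (cls q i - \<Union>(stacked_matching es q n)))"
      using uncovered_stacked_matching_bottom[OF matching es(2)] by blast
  qed
qed

end
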